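(* Let $k \ge 4$, $d \ge k$, and let $A \in \mathbb{R}^{k \times d}$ satisfy $AA^\top = I_k$. Define $f_A(x) = Ax/\|Ax\|_2$ (assume $Ax \neq 0$ almost surely under the prior). Let $\pi$ be a prior on $X \in \mathbb{R}^d$ such that the push-forward $\pi_f$ of $\pi$ under $f_A$ (a distribution on the unit sphere $\mathbb{S}^{k-1}$) satisfies $\log \frac{d\pi_f}{d\pi_0}(v) \le \rho_0$ for all $v \in \mathbb{S}^{k-1}$, where $\pi_0$ is the uniform distribution on $\mathbb{S}^{k-1}$ and $\rho_0\in[0,\infty)$. Let $X\to W\to Z=M(W)$ with $M$ $\varepsilon$-locally differentially private (in the density sense: $M(w)$ has density $q(\cdot\mid w)$ w.r.t. a common $\sigma$-finite measure with $q(z\mid w)\le e^{\varepsilon}q(z\mid w')$ for all $z,w,w'$). Use the loss $L_{\rm rec}(u,v) = \|u/\|u\|_2 - v/\|v\|_2\|_2$ for $v \ne 0$ and $L_{\rm rec}(u,0)=\sqrt2$. Then for $a \in [0,1)$, $M$ is $(\sqrt{2-2a}, p(a), f_A)$-protected against reconstruction for $L_{\rm rec}$, where \[ p(a) = \begin{cases} \exp\!\big(\varepsilon + \rho_0 + \tfrac{k}{2}\log(1-a^2)\big) & \text{if } a \in [0, 1/\sqrt2],\\[2pt] \exp\!\big(\varepsilon + \rho_0 + \tfrac{k-1}{2}\log(1-a^2) - \log(2a\sqrt k)\big) & \text{if } a \in [\sqrt{2/k}, 1). \end{cases} \]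
   Context: A mechanism $M$ is $(\alpha,p,f)$-protected against reconstruction for loss $L_{\rm rec}$ if for every measurable estimator $\widehat v:\mathcal Z\to\mathbb R^k$, $\sup_z \mathbb P(L_{\rm rec}(f(X),\widehat v(z))\le\alpha \mid Z=z)\le p$, the probability being under the prior $\pi$ on $X$ and the randomness of the chain $X\to W\to Z$. *)

theory Defs
  imports "HOL-Probability.Probability"
begin

definition dirmap :: "real^'d^'k \<Rightarrow> real^'d \<Rightarrow> real^'k" where
  "dirmap A x = (A *v x) /\<^sub>R norm (A *v x)"

text \<open>Uniform (normalised surface) distribution on the unit sphere of real^'k,
  realised as the cone measure: push-forward of the uniform distribution on the
  unit ball under y |-> y / norm y.\<close>
definition sphere_unif :: "(real^'k) measure" where
  "sphere_unif = distr (uniform_measure lborel (ball 0 1)) borel (\<lambda>y. y /\<^sub>R norm y)"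

definition Lrec :: "real^'k \<Rightarrow> real^'k \<Rightarrow> real" where
  "Lrec u v = (if v = 0 then sqrt 2 else norm (u /\<^sub>R norm u - v /\<^sub>R norm v))"

text \<open>Likelihood of output z given input x in the chain X -> W -> Z:
  K x is the law of W given X = x, q w z the density of M(w) w.r.t. a reference measure.\<close>
definition lik :: "('x \<Rightarrow> 'w measure) \<Rightarrow> ('w \<Rightarrow> 'z \<Rightarrow> real) \<Rightarrow> 'x \<Rightarrow> 'z \<Rightarrow> ennreal" where
  "lik K q x z = (\<integral>\<^sup>+ w. ennreal (q w z) \<partial>K x)"

definition post :: "'x measure \<Rightarrow> ('x \<Rightarrow> 'w measure) \<Rightarrow> ('w \<Rightarrow> 'z \<Rightarrow> real) \<Rightarrow> 'z \<Rightarrow> 'x set \<Rightarrow> ennreal" where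
  "post pr K q z B =
     (\<integral>\<^sup>+ x. indicator B x * lik K q x z \<partial>pr) / (\<integral>\<^sup>+ x. lik K q x z \<partial>pr)"

definition protected_rec ::
  "'x measure \<Rightarrow> ('x \<Rightarrow> 'w measure) \<Rightarrow> ('w \<Rightarrow> 'z \<Rightarrow> real) \<Rightarrow> 'z measure \<Rightarrow>
   ('x \<Rightarrow> 'v::topological_space) \<Rightarrow> ('v \<Rightarrow> 'v \<Rightarrow> real) \<Rightarrow> real \<Rightarrow> real \<Rightarrow> bool" where
  "protected_rec pr K q \<mu> f L \<alpha> p \<longleftrightarrow>
     (\<forall>vh \<in> \<mu> \<rightarrow>\<^sub>M (borel :: 'v measure). \<forall>z \<in> space \<mu>.
        post pr K q z {x \<in> space pr. L (f x) (vh z) \<le> \<alpha>} \<le> ennreal p)"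

end

theory Submission
  imports Defs
begin

text \<open>
  Local differential privacy makes the likelihoods of any two inputs differ by a factor at most
  exp \<epsilon>, so the posterior probability of an event is at most exp \<epsilon> times its prior probability.
  A reconstruction with loss at most sqrt (2 - 2a) puts the direction f_A(X) into the spherical cap
  of height a around the normalised estimate; by the density bound its prior probability is at most
  exp \<rho>0 times the uniform measure of the cap, which is the volume of the cone over the cap relative
  to the unit ball. For a \<le> 1/sqrt 2 this cone lies in a ball of radius sqrt (1 - a^2). For
  larger a, Fubini along the axis of the cap bounds its volume by a one-dimensional integral, and
  log-convexity of Gamma gives 2 vol(B^(k-1)) \<le> sqrt k vol(B^k).
\<close>

section \<open>Rotation invariance of Lebesgue measure\<close>

definition scales_lebesgue :: "(real^'n \<Rightarrow> real^'n) \<Rightarrow> real \<Rightarrow> bool" where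
  "scales_lebesgue f c \<longleftrightarrow>
     (\<forall>S \<in> lmeasurable. f ` S \<in> lmeasurable \<and> measure lebesgue (f ` S) = c * measure lebesgue S)"

lemma scales_lebesgue_comp:
  fixes f g :: "real^'n \<Rightarrow> real^'n"
  assumes f: "scales_lebesgue f c" and g: "scales_lebesgue g d"
  shows "scales_lebesgue (f \<circ> g) (c * d)"
  unfolding scales_lebesgue_def
proof
  fix S :: "(real^'n) set"
  assume "S \<in> lmeasurable"
  then have "g ` S \<in> lmeasurable" "measure lebesgue (g ` S) = d * measure lebesgue S"
    using g by (auto simp: scales_lebesgue_def)
  moreover from this(1) have "f ` g ` S \<in> lmeasurable"
    "measure lebesgue (f ` g ` S) = c * measure lebesgue (g ` S)"
    using f by (auto simp: scales_lebesgue_def)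
  ultimately show "(f \<circ> g) ` S \<in> lmeasurable \<and>
      measure lebesgue ((f \<circ> g) ` S) = c * d * measure lebesgue S"
    unfolding image_comp[symmetric] by (metis mult.assoc)
qed

lemma scales_lebesgue_if_boxes:
  fixes f :: "real^'n \<Rightarrow> real^'n"
  assumes "linear f" and "\<And>a b. measure lebesgue (f ` cbox a b) = measure lebesgue (cbox a b)"
  shows "scales_lebesgue f 1"
  unfolding scales_lebesgue_def
proof
  fix S :: "(real^'n) set"
  assume "S \<in> lmeasurable"
  then show "f ` S \<in> lmeasurable \<and> measure lebesgue (f ` S) = 1 * measure lebesgue S"
    using measure_linear_sufficient[OF assms(1), of S 1] assms(2) by simp
qed

lemma scales_lebesgue_not_surj:
  fixes f :: "real^'n \<Rightarrow> real^'n"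
  assumes "linear f" and "\<And>x. f x $ i = 0"
  shows "scales_lebesgue f 0"
proof -
  have "\<not> inj f"
    by (metis assms linear_injective_imp_surjective one_neq_zero surjE vec_component)
  then have "negligible (f ` S)" for S
    using assms(1) negligible_linear_singular_image by blast
  then show ?thesis
    unfolding scales_lebesgue_def using negligible_imp_measure0 negligible_imp_measurable by auto
qed

lemma scales_lebesgue_stretch:
  fixes c :: "'n::finite \<Rightarrow> real"
  shows "scales_lebesgue (\<lambda>x::real^'n. \<chi> i. c i * x $ i) \<bar>prod c UNIV\<bar>"
  by (simp add: scales_lebesgue_def measurable_stretch measure_stretch)

lemma scales_lebesgue_swap:
  fixes m n :: "'n::finite"
  shows "scales_lebesgue (\<lambda>x::real^'n. \<chi> i. x $ Transposition.transpose m n i) 1"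
proof (rule scales_lebesgue_if_boxes)
  let ?h = "\<lambda>x::real^'n. \<chi> i. x $ Transposition.transpose m n i"
  show "linear ?h"
    by (rule linearI) (simp_all add: plus_vec_def scaleR_vec_def)
  fix a b :: "real^'n"
  show "measure lebesgue (?h ` cbox a b) = measure lebesgue (cbox a b)"
  proof (cases "cbox a b = {}")
    case False
    then have "?h ` cbox a b \<noteq> {}"
      by blast
    moreover have "?h ` cbox a b = cbox (?h a) (?h b)"
      by (auto simp: image_iff lambda_swap_Galois mem_box_cart) (metis transpose_involutory)+
    ultimately show ?thesis
      using prod.permute[OF permutes_swap_id, where S=UNIV and g="\<lambda>i. (b - a) $ i", symmetric]
      by (simp add: content_cbox_cart False)
  qed simp
qed

text \<open>The library's shear lemma needs a box whose lower corner has nonnegative n-th coordinate;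
  translating the box removes that restriction, since a linear map commutes with translations.\<close>
lemma scales_lebesgue_shear:
  fixes m n :: "'n::finite"
  assumes "m \<noteq> n"
  shows "scales_lebesgue (\<lambda>x::real^'n. \<chi> i. if i = m then x $ m + x $ n else x $ i) 1"
proof -
  define h where "h = (\<lambda>x::real^'n. \<chi> i. if i = m then x $ m + x $ n else x $ i)"
  have lin: "linear h"
    unfolding h_def by (rule linearI) (auto simp: algebra_simps vec_eq_iff)
  have "measure lebesgue (h ` cbox a b) = measure lebesgue (cbox a b)" for a b
  proof (cases "cbox a b = {}")
    case False
    define v :: "real^'n" where "v = (\<chi> i. if i = n then - a $ n else 0)"
    have "h (- v) + h (v + x) = h x" for x
      by (simp add: linear_add[OF lin] linear_neg[OF lin])
    then have "(\<lambda>x. h (- v) + h (v + x)) = h"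
      by (rule ext)
    then have "h ` cbox a b = (+) (h (- v)) ` h ` (+) v ` cbox a b"
      by (simp only: image_image)
    then have "measure lebesgue (h ` cbox a b) = measure lebesgue (h ` cbox (v + a) (v + b))"
      by (simp add: measure_translation cbox_translation)
    also have "\<dots> = measure lebesgue (cbox (v + a) (v + b))"
      unfolding h_def using False assms
      by (intro measure_shear_interval) (auto simp: v_def interval_ne_empty_cart)
    also have "\<dots> = measure lebesgue (cbox a b)"
      by (metis cbox_translation measure_translation)
    finally show ?thesis .
  qed simp
  then show ?thesis
    unfolding h_def[symmetric] by (rule scales_lebesgue_if_boxes[OF lin])
qed

lemma linear_scales_lebesgue:
  fixes f :: "real^'n \<Rightarrow> real^'n"
  assumes "linear f"
  shows "\<exists>c \<ge> 0. scales_lebesgue f c"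
proof (rule induct_linear_elementary[where P = "\<lambda>f. \<exists>c \<ge> 0. scales_lebesgue f c", OF assms])
  fix f g :: "real^'n \<Rightarrow> real^'n"
  assume "\<exists>c \<ge> 0. scales_lebesgue f c" "\<exists>d \<ge> 0. scales_lebesgue g d"
  then obtain c d where "c \<ge> 0" "scales_lebesgue f c" "d \<ge> 0" "scales_lebesgue g d"
    by blast
  then show "\<exists>c \<ge> 0. scales_lebesgue (f \<circ> g) c"
    by (intro exI[of _ "c * d"] conjI mult_nonneg_nonneg scales_lebesgue_comp)
next
  fix f :: "real^'n \<Rightarrow> real^'n" and i
  assume "linear f" "\<And>x. f x $ i = 0"
  then show "\<exists>c \<ge> 0. scales_lebesgue f c"
    by (intro exI[of _ 0] conjI order_refl scales_lebesgue_not_surj)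
next
  fix c :: "'n \<Rightarrow> real"
  show "\<exists>d \<ge> 0. scales_lebesgue (\<lambda>x. \<chi> i. c i * x $ i) d"
    by (intro exI[of _ "\<bar>prod c UNIV\<bar>"] conjI abs_ge_zero scales_lebesgue_stretch)
qed (intro exI[of _ 1] conjI zero_le_one scales_lebesgue_swap scales_lebesgue_shear; assumption)+

text \<open>The library version of this fact requires a well-ordered index type.\<close>
lemma measure_orthogonal_image_cart:
  fixes f :: "real^'n \<Rightarrow> real^'n"
  assumes f: "orthogonal_transformation f" and S: "S \<in> lmeasurable"
  shows "measure lebesgue (f ` S) = measure lebesgue S"
proof -
  obtain c where c: "scales_lebesgue f c"
    using linear_scales_lebesgue orthogonal_transformation_linear[OF f] by blast
  have "f ` cball 0 1 = cball 0 1"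
    using image_orthogonal_transformation_cball[OF f, of 0 1] f
    by (simp add: linear_0 orthogonal_transformation_linear)
  then have "measure lebesgue (cball (0::real^'n) 1) = c * measure lebesgue (cball (0::real^'n) 1)"
    using c lmeasurable_cball unfolding scales_lebesgue_def by metis
  moreover have "measure lebesgue (cball (0::real^'n) 1) > 0"
    by (simp add: content_cball)
  ultimately have "c = 1"
    by simp
  then show ?thesis
    using c S by (simp add: scales_lebesgue_def)
qed

section \<open>Volume of the cone over a spherical cap\<close>

lemma cone_slice_iff:
  fixes a y s :: real
  assumes a: "0 < a" "a < 1" and s: "0 \<le> s"
  shows "(sqrt (y\<^sup>2 + s) \<le> 1 \<and> a * sqrt (y\<^sup>2 + s) \<le> y) \<longleftrightarrow>
         (y \<in> {0..1} \<and> sqrt s \<le> min (sqrt (1 - y\<^sup>2)) (sqrt (1 - a\<^sup>2) / a * y))"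
proof -
  have a2: "a\<^sup>2 < 1"
    using a by (simp add: power_less_one_iff)
  have "a * sqrt (y\<^sup>2 + s) \<le> y \<longleftrightarrow> 0 \<le> y \<and> a\<^sup>2 * (y\<^sup>2 + s) \<le> y\<^sup>2"
    using a s by (smt (verit) mult_nonneg_nonneg power_mono real_sqrt_ge_zero real_sqrt_le_iff
        real_sqrt_mult real_sqrt_pow2 power2_eq_square zero_le_power2 real_sqrt_abs abs_of_nonneg)
  also have "\<dots> \<longleftrightarrow> 0 \<le> y \<and> sqrt s \<le> sqrt (1 - a\<^sup>2) / a * y"
  proof -
    have "a\<^sup>2 * (y\<^sup>2 + s) \<le> y\<^sup>2 \<longleftrightarrow> s \<le> (sqrt (1 - a\<^sup>2) / a * y)\<^sup>2"
      using a a2 by (simp add: power_mult_distrib power_divide field_simps)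
    moreover have "0 \<le> y \<Longrightarrow> 0 \<le> sqrt (1 - a\<^sup>2) / a * y"
      using a a2 by simp
    ultimately show ?thesis
      using real_le_lsqrt sqrt_le_D by blast
  qed
  finally have "a * sqrt (y\<^sup>2 + s) \<le> y \<longleftrightarrow> 0 \<le> y \<and> sqrt s \<le> sqrt (1 - a\<^sup>2) / a * y" .
  moreover have "sqrt (y\<^sup>2 + s) \<le> 1 \<longleftrightarrow> sqrt s \<le> sqrt (1 - y\<^sup>2)"
    by (simp add: algebra_simps)
  moreover have "y\<^sup>2 + s \<le> 1 \<Longrightarrow> y \<le> 1"
    using s abs_square_le_1[of y] by auto
  ultimately show ?thesis
    by auto
qed

lemma borel_measurable_PiM_sqrt_sum_squares:
  assumes "B \<subseteq> I"
  shows "(\<lambda>x. sqrt (\<Sum>j\<in>B. (x j)\<^sup>2)) \<in> borel_measurable (Pi\<^sub>M I (\<lambda>_. lborel::real measure))"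
proof -
  have "(\<lambda>x. x j) \<in> borel_measurable (Pi\<^sub>M I (\<lambda>_. lborel::real measure))" if "j \<in> B" for j
    using assms that measurable_component_singleton[of j I "\<lambda>_. lborel"] by auto
  then have "(\<lambda>x. \<Sum>j\<in>B. (x j)\<^sup>2) \<in> borel_measurable (Pi\<^sub>M I (\<lambda>_. lborel::real measure))"
    by (intro borel_measurable_sum borel_measurable_power)
  then show ?thesis
    by (rule measurable_compose) simp
qed

lemma sets_PiM_sqrt_sum_squares_le:
  "{f. sqrt (\<Sum>j\<in>A. (f j)\<^sup>2) \<le> r} \<inter> space (Pi\<^sub>M A (\<lambda>_. lborel))
     \<in> sets (Pi\<^sub>M A (\<lambda>_. lborel::real measure))"
proof -
  let ?M = "Pi\<^sub>M A (\<lambda>_. lborel::real measure)"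
  have "(\<lambda>f. sqrt (\<Sum>j\<in>A. (f j)\<^sup>2)) \<in> borel_measurable ?M"
    by (simp add: borel_measurable_PiM_sqrt_sum_squares)
  then have "{f \<in> space ?M. sqrt (\<Sum>j\<in>A. (f j)\<^sup>2) \<le> r} \<in> sets ?M"
    by measurable
  moreover have "{f \<in> space ?M. sqrt (\<Sum>j\<in>A. (f j)\<^sup>2) \<le> r} =
      {f. sqrt (\<Sum>j\<in>A. (f j)\<^sup>2) \<le> r} \<inter> space ?M"
    by auto
  ultimately show ?thesis
    by (simp only:)
qed

lemma sets_PiM_cone:
  assumes "i \<in> A"
  shows "{f. sqrt (\<Sum>j\<in>A. (f j)\<^sup>2) \<le> 1 \<and> a * sqrt (\<Sum>j\<in>A. (f j)\<^sup>2) \<le> f i}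
           \<inter> space (Pi\<^sub>M A (\<lambda>_. lborel)) \<in> sets (Pi\<^sub>M A (\<lambda>_. lborel::real measure))"
proof -
  let ?M = "Pi\<^sub>M A (\<lambda>_. lborel::real measure)"
  have c: "(\<lambda>f. f i) \<in> borel_measurable ?M"
    using assms measurable_component_singleton[of i A "\<lambda>_. lborel"] by simp
  have s: "(\<lambda>f. sqrt (\<Sum>j\<in>A. (f j)\<^sup>2)) \<in> borel_measurable ?M"
    by (simp add: borel_measurable_PiM_sqrt_sum_squares)
  have "{f \<in> space ?M. sqrt (\<Sum>j\<in>A. (f j)\<^sup>2) \<le> 1} \<in> sets ?M"
    using s by measurable
  moreover have "{f \<in> space ?M. a * sqrt (\<Sum>j\<in>A. (f j)\<^sup>2) \<le> f i} \<in> sets ?M"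
    using s c by measurable
  ultimately have "{f \<in> space ?M. sqrt (\<Sum>j\<in>A. (f j)\<^sup>2) \<le> 1} \<inter>
      {f \<in> space ?M. a * sqrt (\<Sum>j\<in>A. (f j)\<^sup>2) \<le> f i} \<in> sets ?M"
    by (rule sets.Int)
  moreover have "{f \<in> space ?M. sqrt (\<Sum>j\<in>A. (f j)\<^sup>2) \<le> 1} \<inter>
      {f \<in> space ?M. a * sqrt (\<Sum>j\<in>A. (f j)\<^sup>2) \<le> f i} =
      {f. sqrt (\<Sum>j\<in>A. (f j)\<^sup>2) \<le> 1 \<and> a * sqrt (\<Sum>j\<in>A. (f j)\<^sup>2) \<le> f i} \<inter> space ?M"
    by auto
  ultimately show ?thesis
    by (simp only:)
qed

lemma PiM_cone_fun_upd_iff: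
  fixes a :: real
  assumes A: "finite A" "i \<notin> A" and x: "x \<in> space (Pi\<^sub>M A (\<lambda>_. lborel :: real measure))"
    and a: "0 < a" "a < 1"
  shows "x(i := y) \<in> {f. sqrt (\<Sum>j\<in>insert i A. (f j)\<^sup>2) \<le> 1 \<and>
                          a * sqrt (\<Sum>j\<in>insert i A. (f j)\<^sup>2) \<le> f i}
                      \<inter> space (Pi\<^sub>M (insert i A) (\<lambda>_. lborel :: real measure))
     \<longleftrightarrow> y \<in> {0..1} \<and> sqrt (\<Sum>j\<in>A. (x j)\<^sup>2) \<le> min (sqrt (1 - y\<^sup>2)) (sqrt (1 - a\<^sup>2) / a * y)"
proof -
  have "(\<Sum>j\<in>A. ((x(i := y)) j)\<^sup>2) = (\<Sum>j\<in>A. (x j)\<^sup>2)"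
    using A by (intro sum.cong) auto
  then have "(\<Sum>j\<in>insert i A. ((x(i := y)) j)\<^sup>2) = y\<^sup>2 + (\<Sum>j\<in>A. (x j)\<^sup>2)"
    using A by simp
  moreover have "x(i := y) \<in> space (Pi\<^sub>M (insert i A) (\<lambda>_. lborel :: real measure))"
    using x by (auto simp: space_PiM PiE_def extensional_def)
  ultimately show ?thesis
    using cone_slice_iff[OF a sum_nonneg, of A "\<lambda>j. (x j)\<^sup>2" y] by auto
qed

text \<open>Fubini along coordinate i: the slice of the cone at height y is a ball of radius
  min (sqrt (1 - y^2)) (sqrt (1 - a^2) / a * y) in the remaining coordinates.\<close>
lemma emeasure_PiM_cone:
  fixes a :: real
  assumes A: "finite A" "i \<notin> A" and a: "0 < a" "a < 1"
  shows "emeasure (Pi\<^sub>M (insert i A) (\<lambda>_. lborel))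
     ({f. sqrt (\<Sum>j\<in>insert i A. (f j)\<^sup>2) \<le> 1 \<and> a * sqrt (\<Sum>j\<in>insert i A. (f j)\<^sup>2) \<le> f i}
        \<inter> space (Pi\<^sub>M (insert i A) (\<lambda>_. lborel)))
   = (\<integral>\<^sup>+ y. indicator {0..1} y * ennreal (unit_ball_vol (real (card A)) *
        (min (sqrt (1 - y\<^sup>2)) (sqrt (1 - a\<^sup>2) / a * y)) ^ card A) \<partial>lborel)"
proof -
  interpret product_sigma_finite "\<lambda>_. lborel"
    by standard
  let ?M = "Pi\<^sub>M (insert i A) (\<lambda>_. lborel :: real measure)"
    and ?N = "Pi\<^sub>M A (\<lambda>_. lborel :: real measure)"
  define R where "R y = min (sqrt (1 - y\<^sup>2)) (sqrt (1 - a\<^sup>2) / a * y)" for y :: real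
  define S where "S = {f. sqrt (\<Sum>j\<in>insert i A. (f j)\<^sup>2) \<le> 1 \<and>
                         a * sqrt (\<Sum>j\<in>insert i A. (f j)\<^sup>2) \<le> f i} \<inter> space ?M"
  define T where "T y = {f. sqrt (\<Sum>j\<in>A. (f j)\<^sup>2) \<le> R y} \<inter> space ?N" for y
  have S: "S \<in> sets ?M"
    unfolding S_def by (rule sets_PiM_cone) simp
  have T: "T y \<in> sets ?N" for y
    unfolding T_def by (rule sets_PiM_sqrt_sum_squares_le)
  have slice: "indicator S (x(i := y)) = (indicator {0..1} y * indicator (T y) x :: ennreal)"
    if "x \<in> space ?N" for x y
    using PiM_cone_fun_upd_iff[OF A that a, of y] that
    unfolding S_def T_def R_def by (auto simp: indicator_def)
  have "AE y in lborel. y \<notin> {0, 1}"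
    by (intro AE_not_in countable_imp_null_set_lborel) auto
  then have ball: "AE y in lborel. indicator {0..1} y * emeasure ?N (T y) =
      indicator {0..1} y * ennreal (unit_ball_vol (real (card A)) * R y ^ card A)"
  proof eventually_elim
    case (elim y)
    show ?case
    proof (cases "y \<in> {0<..<1}")
      case True
      then have "R y > 0"
        using a by (simp add: R_def power_less_one_iff abs_square_less_1)
      then show ?thesis
        unfolding T_def using A by (subst emeasure_cball_aux) auto
    qed (use elim in auto)
  qed
  have "emeasure ?M S = (\<integral>\<^sup>+ y. \<integral>\<^sup>+ x. indicator S (x(i := y)) \<partial>?N \<partial>lborel)"
    using A S by (simp add: product_nn_integral_insert_rev flip: nn_integral_indicator)
  also have "\<dots> = (\<integral>\<^sup>+ y. indicator {0..1} y * emeasure ?N (T y) \<partial>lborel)"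
    using T by (simp add: slice nn_integral_cmult cong: nn_integral_cong)
  also have "\<dots> = (\<integral>\<^sup>+ y. indicator {0..1} y * ennreal (unit_ball_vol (real (card A)) * R y ^ card A) \<partial>lborel)"
    using ball by (rule nn_integral_cong_AE)
  finally show ?thesis
    unfolding S_def R_def .
qed

text \<open>The cone over the spherical cap {v. norm v = 1, a \<le> v \<bullet> u}, cut off at the unit sphere;
  its volume fraction of the unit ball is the uniform measure of the cap.\<close>
definition cap_cone :: "real \<Rightarrow> 'a::euclidean_space \<Rightarrow> 'a set" where
  "cap_cone a u = {y. norm y \<le> 1 \<and> a * norm y \<le> y \<bullet> u}"

lemma compact_cap_cone: "compact (cap_cone a u)"
proof -
  have "closed (cap_cone a u)"
    unfolding cap_cone_def by (intro closed_Collect_conj closed_Collect_le continuous_intros)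
  moreover have "bounded (cap_cone a u)"
    unfolding cap_cone_def bounded_iff by auto
  ultimately show ?thesis
    by (simp add: compact_eq_bounded_closed)
qed

lemma cap_cone_in_borel [measurable]: "cap_cone a u \<in> sets borel"
  by (intro borel_closed compact_imp_closed compact_cap_cone)

lemma emeasure_cap_cone_Basis:
  fixes b :: "'a::euclidean_space"
  assumes b: "b \<in> Basis" and a: "0 < a" "a < 1"
  shows "emeasure lborel (cap_cone a b)
   = (\<integral>\<^sup>+ y. indicator {0..1} y * ennreal (unit_ball_vol (real (DIM('a) - 1)) *
        (min (sqrt (1 - y\<^sup>2)) (sqrt (1 - a\<^sup>2) / a * y)) ^ (DIM('a) - 1)) \<partial>lborel)"
proof -
  let ?A = "Basis - {b} :: 'a set"
  have ins: "insert b ?A = Basis"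
    using b by auto
  have norm_sum: "norm (\<Sum>j\<in>Basis. f j *\<^sub>R j :: 'a) = sqrt (\<Sum>j\<in>Basis. (f j)\<^sup>2)" for f
    using euclidean_dist_l2[of 0 "\<Sum>j\<in>Basis. f j *\<^sub>R j :: 'a"] by (simp add: L2_set_def)
  have "emeasure lborel (cap_cone a b) =
      emeasure (\<Pi>\<^sub>M j\<in>Basis. lborel)
        ({f. sqrt (\<Sum>j\<in>Basis. (f j)\<^sup>2) \<le> 1 \<and> a * sqrt (\<Sum>j\<in>Basis. (f j)\<^sup>2) \<le> f b}
         \<inter> space (\<Pi>\<^sub>M j\<in>Basis. lborel))"
    using b by (subst lborel_eq) (auto simp: emeasure_distr vimage_def Int_def conj_commute
        cap_cone_def norm_sum inner_sum_left_Basis)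
  also have "\<dots> = (\<integral>\<^sup>+ y. indicator {0..1} y * ennreal (unit_ball_vol (real (card ?A)) *
        (min (sqrt (1 - y\<^sup>2)) (sqrt (1 - a\<^sup>2) / a * y)) ^ card ?A) \<partial>lborel)"
    using emeasure_PiM_cone[of ?A b a] a ins by simp
  finally show ?thesis
    using b by (simp add: card_Diff_singleton)
qed

lemma emeasure_lborel_cap_cone_eq_measure:
  "emeasure lborel (cap_cone a u) = measure lebesgue (cap_cone a u)"
proof -
  have "emeasure lborel (cap_cone a u) < \<infinity>"
    by (rule emeasure_bounded_finite[OF compact_imp_bounded[OF compact_cap_cone]])
  then show ?thesis
    by (simp add: emeasure_eq_ennreal_measure)
qed

lemma emeasure_cap_cone_orthogonal:
  fixes e u :: "real^'n"
  assumes "norm e = 1" "norm u = 1"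
  shows "emeasure lborel (cap_cone a e) = emeasure lborel (cap_cone a u)"
proof -
  obtain f where f: "orthogonal_transformation f" "f u = e"
    using orthogonal_transformation_exists_1[OF assms(2,1)] by metis
  have "f x \<bullet> f y = x \<bullet> y" "norm (f x) = norm x" for x y
    using f(1) orthogonal_transformation_norm unfolding orthogonal_transformation_def by auto
  then have mem: "f y \<in> cap_cone a e \<longleftrightarrow> y \<in> cap_cone a u" for y
    unfolding cap_cone_def f(2)[symmetric] by simp
  have "f ` cap_cone a u = cap_cone a e"
  proof
    show "f ` cap_cone a u \<subseteq> cap_cone a e"
      using mem by blast
    show "cap_cone a e \<subseteq> f ` cap_cone a u"
    proof
      fix z
      assume z: "z \<in> cap_cone a e"
      obtain y where "z = f y"
        using orthogonal_transformation_surj[OF f(1)] by (metis surjD)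
      with z mem show "z \<in> f ` cap_cone a u"
        by blast
    qed
  qed
  then show ?thesis
    using measure_orthogonal_image_cart[OF f(1) lmeasurable_compact[OF compact_cap_cone[of a u]]]
    by (simp add: emeasure_lborel_cap_cone_eq_measure)
qed

lemma has_integral_scaled_power:
  fixes a c U :: real and n :: nat
  assumes "0 \<le> a"
  shows "((\<lambda>t. U * (c * t) ^ n) has_integral U * c ^ n * a ^ (n + 1) / (n + 1)) {0..a}"
proof -
  have "((\<lambda>t. U * (c * t) ^ n) has_integral
          (\<lambda>t. U * c ^ n * t ^ (n + 1) / (n + 1)) a - (\<lambda>t. U * c ^ n * t ^ (n + 1) / (n + 1)) 0) {0..a}"
  proof (rule fundamental_theorem_of_calculus[OF assms])
    fix x :: real
    show "((\<lambda>t. U * c ^ n * t ^ (n + 1) / (n + 1)) has_vector_derivative U * (c * x) ^ n) (at x within {0..a})"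
      unfolding has_real_derivative_iff_has_vector_derivative[symmetric]
      by (rule derivative_eq_intros refl | simp)+ (simp add: power_mult_distrib field_simps)
  qed
  then show ?thesis
    by simp
qed

lemma has_integral_mult_sqrt_one_minus_square_power:
  fixes a :: real and n :: nat
  assumes "0 \<le> a" "a \<le> 1"
  shows "((\<lambda>t. t * sqrt (1 - t\<^sup>2) ^ n) has_integral sqrt (1 - a\<^sup>2) ^ (n + 2) / (n + 2)) {a..1}"
proof -
  define F where "F t = - (sqrt (1 - t\<^sup>2) ^ (n + 2) / (n + 2))" for t :: real
  have "((\<lambda>t. t * sqrt (1 - t\<^sup>2) ^ n) has_integral F 1 - F a) {a..1}"
  proof (rule fundamental_theorem_of_calculus_interior[OF assms(2)])
    show "continuous_on {a..1} F"
      unfolding F_def by (intro continuous_intros) auto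
  next
    fix x :: real
    assume "x \<in> {a<..<1}"
    then have pos: "0 < 1 - x\<^sup>2"
      using assms by (simp add: abs_square_less_1)
    then have "sqrt (1 - x\<^sup>2) \<noteq> 0"
      by simp
    have "((\<lambda>t. sqrt (1 - t\<^sup>2)) has_real_derivative inverse (sqrt (1 - x\<^sup>2)) / 2 * (- (2 * x))) (at x)"
      by (rule DERIV_chain2[where g="\<lambda>t. 1 - t\<^sup>2", OF DERIV_real_sqrt[OF pos]])
         (rule derivative_eq_intros refl | simp)+
    from DERIV_cdivide[OF DERIV_power[OF this, of "n + 2"], of "n + 2"]
    have "(F has_real_derivative
            - (of_nat (n + 2) * (inverse (sqrt (1 - x\<^sup>2)) / 2 * (- (2 * x)) *
                sqrt (1 - x\<^sup>2) ^ (n + 2 - Suc 0)) / (n + 2))) (at x)"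
      unfolding F_def by (rule DERIV_minus)
    moreover have "- (of_nat (n + 2) * (inverse (sqrt (1 - x\<^sup>2)) / 2 * (- (2 * x)) *
        sqrt (1 - x\<^sup>2) ^ (n + 2 - Suc 0)) / (n + 2)) = x * sqrt (1 - x\<^sup>2) ^ n"
      using \<open>sqrt (1 - x\<^sup>2) \<noteq> 0\<close> by (simp add: field_simps)
    ultimately have "(F has_real_derivative x * sqrt (1 - x\<^sup>2) ^ n) (at x)"
      by (simp only:)
    then show "(F has_vector_derivative x * sqrt (1 - x\<^sup>2) ^ n) (at x)"
      by (simp add: has_real_derivative_iff_has_vector_derivative)
  qed
  then show ?thesis
    by (simp add: F_def)
qed

text \<open>The slice radius is at most c y below height a and at most
  sqrt (1 - y^2) \<le> (y / a) sqrt (1 - y^2) above it; both bounds integrate in closed form.\<close>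
lemma cone_slice_power_le:
  fixes a c y U :: real and n :: nat
  assumes a: "0 < a" and c: "0 \<le> c" and U: "0 \<le> U"
  shows "indicator {0..1} y * ennreal (U * (min (sqrt (1 - y\<^sup>2)) (c * y)) ^ n)
      \<le> ennreal (U * (c * y) ^ n) * indicator {0..a} y
         + ennreal (U / a * (y * sqrt (1 - y\<^sup>2) ^ n)) * indicator {a..1} y"
proof (cases "y \<in> {0..1}")
  case y: True
  then have R: "0 \<le> min (sqrt (1 - y\<^sup>2)) (c * y)"
    using c by (simp add: abs_square_le_1)
  show ?thesis
  proof (cases "y \<le> a")
    case True
    have "min (sqrt (1 - y\<^sup>2)) (c * y) ^ n \<le> (c * y) ^ n"
      using R by (intro power_mono) auto
    then have "U * min (sqrt (1 - y\<^sup>2)) (c * y) ^ n \<le> U * (c * y) ^ n"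
      using U by (rule mult_left_mono)
    then show ?thesis
      using True y by (simp add: ennreal_leI add_increasing2)
  next
    case False
    have "min (sqrt (1 - y\<^sup>2)) (c * y) ^ n \<le> sqrt (1 - y\<^sup>2) ^ n"
      using R by (intro power_mono) auto
    also have "\<dots> \<le> y / a * sqrt (1 - y\<^sup>2) ^ n"
      using False a y mult_right_mono[of 1 "y / a" "sqrt (1 - y\<^sup>2) ^ n"]
      by (simp add: abs_square_le_1)
    finally have "U * min (sqrt (1 - y\<^sup>2)) (c * y) ^ n \<le> U * (y / a * sqrt (1 - y\<^sup>2) ^ n)"
      using U by (rule mult_left_mono)
    then show ?thesis
      using False y by (simp add: ennreal_leI add_increasing)
  qed
qed simp

lemma cone_slice_integrals_le:
  fixes a U :: real and n :: nat
  assumes a: "0 < a" "a < 1" and U: "0 \<le> U"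
  shows "U * (sqrt (1 - a\<^sup>2) / a) ^ n * a ^ (n + 1) / (n + 1)
           + U / a * (sqrt (1 - a\<^sup>2) ^ (n + 2) / (n + 2))
         \<le> U * sqrt (1 - a\<^sup>2) ^ n / (a * (n + 1))"
proof -
  define s where "s = sqrt (1 - a\<^sup>2)"
  have s: "0 \<le> s" "s\<^sup>2 = 1 - a\<^sup>2"
    using a by (simp_all add: s_def abs_square_le_1)
  have e1: "U * (s / a) ^ n * a ^ (n + 1) / (n + 1) = U * s ^ n / a * (a\<^sup>2 / (n + 1))"
    using a by (simp add: power_divide power2_eq_square field_simps)
  have e2: "U / a * (s ^ (n + 2) / (n + 2)) = U * s ^ n / a * ((1 - a\<^sup>2) / (n + 2))"
    using s by (simp add: power_add power2_eq_square)
  have "U * (s / a) ^ n * a ^ (n + 1) / (n + 1) + U / a * (s ^ (n + 2) / (n + 2))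
      = U * s ^ n / a * (a\<^sup>2 / (n + 1) + (1 - a\<^sup>2) / (n + 2))"
    unfolding e1 e2 distrib_left ..
  also have "\<dots> \<le> U * s ^ n / a * (a\<^sup>2 / (n + 1) + (1 - a\<^sup>2) / (n + 1))"
    using U a s by (intro mult_left_mono add_left_mono divide_left_mono) (auto simp: abs_square_le_1)
  also have "\<dots> = U * s ^ n / (a * (n + 1))"
    by (simp add: add_divide_distrib[symmetric])
  finally show ?thesis
    unfolding s_def .
qed

lemma nn_integral_cone_slices_le:
  fixes a U :: real and n :: nat
  assumes a: "0 < a" "a < 1" and U: "0 \<le> U"
  shows "(\<integral>\<^sup>+ y. indicator {0..1} y *
            ennreal (U * (min (sqrt (1 - y\<^sup>2)) (sqrt (1 - a\<^sup>2) / a * y)) ^ n) \<partial>lborel)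
         \<le> ennreal (U * sqrt (1 - a\<^sup>2) ^ n / (a * (n + 1)))"
proof -
  define s where "s = sqrt (1 - a\<^sup>2)"
  define c where "c = s / a"
  have s: "0 \<le> s"
    using a by (simp add: s_def abs_square_le_1)
  have c: "0 \<le> c"
    using a s by (simp add: c_def)
  have "(\<integral>\<^sup>+ y. indicator {0..1} y * ennreal (U * (min (sqrt (1 - y\<^sup>2)) (c * y)) ^ n) \<partial>lborel)
     \<le> (\<integral>\<^sup>+ y. ennreal (U * (c * y) ^ n) * indicator {0..a} y
              + ennreal (U / a * (y * sqrt (1 - y\<^sup>2) ^ n)) * indicator {a..1} y \<partial>lborel)"
    by (intro nn_integral_mono cone_slice_power_le a c U)
  also have "\<dots> = (\<integral>\<^sup>+ y. ennreal (U * (c * y) ^ n) * indicator {0..a} y \<partial>lborel)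
       + (\<integral>\<^sup>+ y. ennreal (U / a * (y * sqrt (1 - y\<^sup>2) ^ n)) * indicator {a..1} y \<partial>lborel)"
    by (rule nn_integral_add) auto
  also have "(\<integral>\<^sup>+ y. ennreal (U * (c * y) ^ n) * indicator {0..a} y \<partial>lborel)
      = ennreal (U * c ^ n * a ^ (n + 1) / (n + 1))"
    using U c a by (intro nn_integral_has_integral_lebesgue' has_integral_scaled_power) auto
  also have "(\<integral>\<^sup>+ y. ennreal (U / a * (y * sqrt (1 - y\<^sup>2) ^ n)) * indicator {a..1} y \<partial>lborel)
      = ennreal (U / a * (s ^ (n + 2) / (n + 2)))"
    unfolding s_def using U a
    by (intro nn_integral_has_integral_lebesgue' has_integral_mult_right
        has_integral_mult_sqrt_one_minus_square_power) (auto simp: abs_square_le_1)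
  also have "ennreal (U * c ^ n * a ^ (n + 1) / (n + 1)) + ennreal (U / a * (s ^ (n + 2) / (n + 2)))
      = ennreal (U * c ^ n * a ^ (n + 1) / (n + 1) + U / a * (s ^ (n + 2) / (n + 2)))"
    using U a s c by (intro ennreal_plus[symmetric]) auto
  also have "\<dots> \<le> ennreal (U * s ^ n / (a * (n + 1)))"
    unfolding c_def s_def using cone_slice_integrals_le[OF a U] by (rule ennreal_leI)
  finally show ?thesis
    by (simp add: c_def s_def)
qed

text \<open>Log-convexity of Gamma at the midpoint of x and x + 1.\<close>
lemma Gamma_plus_half_le:
  fixes x :: real
  assumes x: "0 < x"
  shows "Gamma (x + 1/2) \<le> Gamma x * sqrt x"
proof -
  have G: "0 < Gamma x"
    using x by (rule Gamma_real_pos)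
  have "(ln \<circ> Gamma) ((1 - 1/2) *\<^sub>R x + (1/2) *\<^sub>R (x + 1))
      \<le> (1 - 1/2) * (ln \<circ> Gamma) x + (1/2) * (ln \<circ> Gamma) (x + 1)"
    using x by (intro convex_onD[OF log_convex_Gamma_real]) auto
  moreover have "(1 - 1/2) *\<^sub>R x + (1/2) *\<^sub>R (x + 1) = x + 1/2"
    by (simp add: field_simps)
  moreover have "Gamma (x + 1) = x * Gamma x"
    using Gamma_plus1[of x] x by (simp add: nonpos_Ints_def)
  ultimately have "ln (Gamma (x + 1/2)) \<le> ln (Gamma x) + ln x / 2"
    using x G by (simp add: ln_mult_pos field_simps)
  also have "\<dots> = ln (Gamma x * sqrt x)"
    using x G by (simp add: ln_mult_pos ln_sqrt)
  finally show ?thesis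
    using x G Gamma_real_pos[of "x + 1/2"] by simp
qed

lemma unit_ball_vol_Suc_ge:
  assumes n: "1 \<le> n"
  shows "2 * unit_ball_vol (real n) \<le> sqrt (real n + 1) * unit_ball_vol (real (n + 1))"
proof -
  define x where "x = real n / 2 + 1"
  have x: "0 < x" "0 < Gamma x" "0 < Gamma (x + 1/2)"
    by (simp_all add: x_def Gamma_real_pos)
  have vol_n: "unit_ball_vol (real n) = pi powr (real n / 2) / Gamma x"
    unfolding unit_ball_vol_def x_def by simp
  have vol_Suc: "unit_ball_vol (real (n + 1)) = sqrt pi * pi powr (real n / 2) / Gamma (x + 1/2)"
  proof -
    have "pi powr (real (n + 1) / 2) = pi powr (1/2) * pi powr (real n / 2)"
      by (simp add: powr_add[symmetric] add_divide_distrib)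
    moreover have "real (n + 1) / 2 + 1 = x + 1/2"
      by (simp add: x_def field_simps)
    ultimately show ?thesis
      unfolding unit_ball_vol_def by (simp add: powr_half_sqrt)
  qed
  have "4 * x \<le> 3 * (real n + 1)"
    using n by (simp add: x_def)
  also have "\<dots> \<le> pi * (real n + 1)"
    using pi_gt3 by (intro mult_right_mono) auto
  finally have "sqrt (4 * x) \<le> sqrt (pi * (real n + 1))"
    by simp
  then have "2 * sqrt x \<le> sqrt pi * sqrt (real n + 1)"
    by (simp add: real_sqrt_mult)
  then have "Gamma x * (2 * sqrt x) \<le> Gamma x * (sqrt pi * sqrt (real n + 1))"
    using x by (intro mult_left_mono) auto
  then have "2 * Gamma (x + 1/2) \<le> Gamma x * (sqrt pi * sqrt (real n + 1))"
    using Gamma_plus_half_le[OF x(1)] by simp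
  then show ?thesis
    unfolding vol_n vol_Suc using x by (simp add: field_simps)
qed

lemma cap_cone_subset_cball:
  fixes e :: "'a::euclidean_space"
  assumes e: "norm e = 1" and a: "0 \<le> a" "a\<^sup>2 \<le> 1/2"
  shows "cap_cone a e \<subseteq> cball (a *\<^sub>R e) (sqrt (1 - a\<^sup>2))"
proof
  fix y
  assume "y \<in> cap_cone a e"
  then have y: "norm y \<le> 1" "a * norm y \<le> y \<bullet> e"
    by (auto simp: cap_cone_def)
  have "e \<bullet> e = 1"
    using e by (simp add: power2_norm_eq_inner[symmetric])
  then have "(norm (y - a *\<^sub>R e))\<^sup>2 = (norm y)\<^sup>2 - 2 * a * (y \<bullet> e) + a\<^sup>2"
    unfolding power2_norm_eq_inner
    by (simp add: inner_diff_left inner_diff_right inner_commute algebra_simps power2_eq_square)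
  also have "\<dots> \<le> (norm y)\<^sup>2 - 2 * a * (a * norm y) + a\<^sup>2"
    using y(2) a by (simp add: mult_left_mono)
  also have "\<dots> \<le> 1 - a\<^sup>2"
  proof -
    have "0 \<le> norm y + 1 - 2 * a\<^sup>2"
      using a(2) norm_ge_zero[of y] by linarith
    with y(1) have "(norm y - 1) * (norm y + 1 - 2 * a\<^sup>2) \<le> 0"
      by (intro mult_nonpos_nonneg) auto
    then show ?thesis
      by (simp add: algebra_simps power2_eq_square)
  qed
  finally show "y \<in> cball (a *\<^sub>R e) (sqrt (1 - a\<^sup>2))"
    by (simp add: dist_norm norm_minus_commute real_le_rsqrt)
qed

lemma emeasure_cap_cone_le_small:
  fixes e :: "real^'n"
  assumes e: "norm e = 1" and a: "0 \<le> a" "a \<le> 1 / sqrt 2"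
  shows "emeasure lborel (cap_cone a e) \<le>
     ennreal (sqrt (1 - a\<^sup>2) ^ CARD('n)) * emeasure lborel (ball (0::real^'n) 1)"
proof -
  have a2: "a\<^sup>2 \<le> 1/2"
    using power_mono[OF a(2) a(1), of 2] by (simp add: power_divide)
  have "emeasure lborel (cap_cone a e) \<le> emeasure lborel (cball (a *\<^sub>R e) (sqrt (1 - a\<^sup>2)))"
    using cap_cone_subset_cball[OF e a(1) a2] by (rule emeasure_mono) simp
  also have "\<dots> = ennreal (sqrt (1 - a\<^sup>2) ^ CARD('n)) * emeasure lborel (ball (0::real^'n) 1)"
    using a2 by (simp add: emeasure_cball emeasure_ball ennreal_mult mult.commute)
  finally show ?thesis .
qed

lemma emeasure_cap_cone_le_large:
  fixes e :: "real^'n" and a :: real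
  assumes e: "norm e = 1" and a: "0 < a" "a < 1" and n: "2 \<le> CARD('n)"
  shows "emeasure lborel (cap_cone a e) \<le>
     ennreal (sqrt (1 - a\<^sup>2) ^ (CARD('n) - 1) / (2 * a * sqrt (real CARD('n))))
       * emeasure lborel (ball (0::real^'n) 1)"
proof -
  obtain b :: "real^'n" where b: "b \<in> Basis"
    using nonempty_Basis by blast
  define m where "m = CARD('n) - 1"
  have m: "1 \<le> m" "m + 1 = CARD('n)"
    using n by (auto simp: m_def)
  define s where "s = sqrt (1 - a\<^sup>2)"
  have s: "0 \<le> s"
    using a by (simp add: s_def abs_square_le_1)
  define U where "U = unit_ball_vol (real m)"
  have "emeasure lborel (cap_cone a e) = emeasure lborel (cap_cone a b)"
    using e b by (intro emeasure_cap_cone_orthogonal) auto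
  also have "\<dots> = (\<integral>\<^sup>+ y. indicator {0..1} y *
      ennreal (U * (min (sqrt (1 - y\<^sup>2)) (sqrt (1 - a\<^sup>2) / a * y)) ^ m) \<partial>lborel)"
    using emeasure_cap_cone_Basis[OF b a] by (simp add: U_def m_def)
  also have "\<dots> \<le> ennreal (U * s ^ m / (a * (m + 1)))"
    unfolding s_def using a by (intro nn_integral_cone_slices_le) (auto simp: U_def)
  also have "\<dots> \<le> ennreal (s ^ m / (2 * a * sqrt (real m + 1)) * unit_ball_vol (real (m + 1)))"
  proof (rule ennreal_leI)
    have "U * s ^ m / (a * (m + 1)) = 2 * U * s ^ m / (2 * a * (sqrt (real m + 1) * sqrt (real m + 1)))"
      using a by simp
    also have "\<dots> \<le> sqrt (real m + 1) * unit_ball_vol (real (m + 1)) * s ^ m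
                    / (2 * a * (sqrt (real m + 1) * sqrt (real m + 1)))"
      unfolding U_def using unit_ball_vol_Suc_ge[OF m(1)] a s
      by (intro divide_right_mono mult_right_mono) auto
    also have "\<dots> = s ^ m / (2 * a * sqrt (real m + 1)) * unit_ball_vol (real (m + 1))"
      using a by (simp add: field_simps del: real_sqrt_mult_self)
    finally show "U * s ^ m / (a * (m + 1)) \<le> s ^ m / (2 * a * sqrt (real m + 1)) * unit_ball_vol (real (m + 1))" .
  qed
  also have "\<dots> = ennreal (s ^ m / (2 * a * sqrt (real m + 1))) * ennreal (unit_ball_vol (real (m + 1)))"
    using a s by (intro ennreal_mult) auto
  also have "ennreal (unit_ball_vol (real (m + 1))) = emeasure lborel (ball (0::real^'n) 1)"
    using m(2) by (simp add: emeasure_ball)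
  finally show ?thesis
    using m(2) by (simp add: s_def m_def)
qed

section \<open>Posterior bounds under local differential privacy\<close>

lemma kernel_prob_space:
  assumes "K \<in> M \<rightarrow>\<^sub>M prob_algebra N" and "x \<in> space M"
  shows "prob_space (K x)" "sets (K x) = sets N" "space (K x) = space N"
  using measurable_space[OF assms] sets_eq_imp_space_eq by (auto simp: space_prob_algebra)

lemma borel_measurable_lik:
  assumes "K \<in> M \<rightarrow>\<^sub>M prob_algebra N" and "(\<lambda>w. q w z) \<in> borel_measurable N"
  shows "(\<lambda>x. lik K q x z) \<in> borel_measurable M"
proof -
  have "(\<lambda>w. ennreal (q w z)) \<in> borel_measurable N"
    using assms(2) by simp
  from measurable_compose[OF measurable_prob_algebraD[OF assms(1)]
      nn_integral_measurable_subprob_algebra[OF this]]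
  show ?thesis
    by (simp add: lik_def)
qed

lemma lik_le_exp_lik:
  assumes K: "K \<in> M \<rightarrow>\<^sub>M prob_algebra N" and q: "(\<lambda>w. q w z) \<in> borel_measurable N"
    and ldp: "\<And>w w'. w \<in> space N \<Longrightarrow> w' \<in> space N \<Longrightarrow> q w z \<le> exp \<epsilon> * q w' z"
    and x: "x \<in> space M" and x': "x' \<in> space M"
  shows "lik K q x z \<le> ennreal (exp \<epsilon>) * lik K q x' z"
proof -
  interpret Kx: prob_space "K x"
    using kernel_prob_space[OF K x] by simp
  interpret Kx': prob_space "K x'"
    using kernel_prob_space[OF K x'] by simp
  have q': "(\<lambda>w. ennreal (q w z)) \<in> borel_measurable (K x')"
    using q kernel_prob_space(2)[OF K x'] by (simp cong: measurable_cong_sets)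
  have "ennreal (q w z) \<le> ennreal (exp \<epsilon>) * lik K q x' z" if w: "w \<in> space N" for w
  proof -
    have "ennreal (q w z) = (\<integral>\<^sup>+ w'. ennreal (q w z) \<partial>K x')"
      by (simp add: Kx'.emeasure_space_1)
    also have "\<dots> \<le> (\<integral>\<^sup>+ w'. ennreal (exp \<epsilon>) * ennreal (q w' z) \<partial>K x')"
      using ldp[OF w] kernel_prob_space(3)[OF K x']
      by (intro nn_integral_mono) (simp add: ennreal_mult'[symmetric] ennreal_leI)
    also have "\<dots> = ennreal (exp \<epsilon>) * lik K q x' z"
      unfolding lik_def by (rule nn_integral_cmult[OF q'])
    finally show ?thesis .
  qed
  then have "lik K q x z \<le> (\<integral>\<^sup>+ w. ennreal (exp \<epsilon>) * lik K q x' z \<partial>K x)"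
    unfolding lik_def using kernel_prob_space(3)[OF K x] by (intro nn_integral_mono) simp
  also have "\<dots> = ennreal (exp \<epsilon>) * lik K q x' z"
    by (simp add: Kx.emeasure_space_1)
  finally show ?thesis .
qed

text \<open>In Bayes' formula every likelihood is at most exp \<epsilon> times the evidence.\<close>
lemma post_le_exp_emeasure:
  assumes pr: "prob_space pr" and K: "K \<in> pr \<rightarrow>\<^sub>M prob_algebra N"
    and q: "(\<lambda>w. q w z) \<in> borel_measurable N"
    and ldp: "\<And>w w'. w \<in> space N \<Longrightarrow> w' \<in> space N \<Longrightarrow> q w z \<le> exp \<epsilon> * q w' z"
    and B': "B' \<in> sets pr" and B: "AE x in pr. x \<in> B \<longrightarrow> x \<in> B'"
  shows "post pr K q z B \<le> ennreal (exp \<epsilon>) * emeasure pr B'"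
proof -
  interpret prob_space pr
    by (rule pr)
  define E where "E = ennreal (exp \<epsilon>)"
  define L where "L x = lik K q x z" for x
  define evidence where "evidence = (\<integral>\<^sup>+ x. L x \<partial>pr)"
  have L_le: "L x \<le> E * evidence" if x: "x \<in> space pr" for x
  proof -
    have "L x = (\<integral>\<^sup>+ x'. L x \<partial>pr)"
      by (simp add: emeasure_space_1)
    also have "\<dots> \<le> (\<integral>\<^sup>+ x'. E * L x' \<partial>pr)"
      unfolding L_def E_def using lik_le_exp_lik[where q=q and z=z and \<epsilon>=\<epsilon>, OF K q ldp x]
      by (intro nn_integral_mono) auto
    also have "\<dots> = E * evidence"
      unfolding evidence_def L_def using borel_measurable_lik[where q=q and z=z, OF K q]
      by (rule nn_integral_cmult)
    finally show ?thesis .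
  qed
  have "AE x in pr. indicator B x * L x \<le> (E * evidence) * indicator B' x"
    using B AE_space by eventually_elim (auto simp: L_le indicator_def)
  then have "(\<integral>\<^sup>+ x. indicator B x * L x \<partial>pr) \<le> (\<integral>\<^sup>+ x. (E * evidence) * indicator B' x \<partial>pr)"
    by (rule nn_integral_mono_AE)
  also have "\<dots> = E * evidence * emeasure pr B'"
    using B' by (rule nn_integral_cmult_indicator)
  also have "\<dots> = evidence * (E * emeasure pr B')"
    by (simp only: ac_simps)
  finally have num: "(\<integral>\<^sup>+ x. indicator B x * L x \<partial>pr) \<le> evidence * (E * emeasure pr B')" .
  show ?thesis
  proof (cases "evidence = 0")
    case True
    then show ?thesis
      using num by (simp add: post_def L_def evidence_def)
  next
    case False
    then show ?thesis
      using num unfolding post_def L_def[symmetric] evidence_def[symmetric] E_def[symmetric]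
      by (intro divide_le_posI_ennreal) (simp_all add: zero_less_iff_neq_zero)
  qed
qed

lemma protected_rec_mono:
  "protected_rec pr K q \<mu> f L \<alpha> p \<Longrightarrow> p \<le> p' \<Longrightarrow> protected_rec pr K q \<mu> f L \<alpha> p'"
  unfolding protected_rec_def by (meson ennreal_leI order_trans)

lemma protected_rec_exp:
  assumes pr: "prob_space pr" and K: "K \<in> pr \<rightarrow>\<^sub>M prob_algebra N"
    and q: "case_prod q \<in> borel_measurable (N \<Otimes>\<^sub>M \<mu>)"
    and ldp: "\<And>w w' z. w \<in> space N \<Longrightarrow> w' \<in> space N \<Longrightarrow> z \<in> space \<mu> \<Longrightarrow>
                q w z \<le> exp \<epsilon> * q w' z"
  shows "protected_rec pr K q \<mu> f L \<alpha> (exp \<epsilon>)"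
  unfolding protected_rec_def
proof (intro ballI)
  fix v z
  assume z: "z \<in> space \<mu>"
  have "(\<lambda>w. q w z) \<in> borel_measurable N"
    using measurable_compose[OF measurable_Pair2'[OF z] q] by simp
  then have "post pr K q z {x \<in> space pr. L (f x) (v z) \<le> \<alpha>}
      \<le> ennreal (exp \<epsilon>) * emeasure pr (space pr)"
    using ldp z by (intro post_le_exp_emeasure[OF pr K]) auto
  then show "post pr K q z {x \<in> space pr. L (f x) (v z) \<le> \<alpha>} \<le> ennreal (exp \<epsilon>)"
    by (simp add: prob_space.emeasure_space_1[OF pr])
qed

section \<open>Protection against reconstruction\<close>

lemma borel_measurable_dirmap [measurable]: "dirmap A \<in> borel_measurable borel"
proof -
  have [measurable]: "(*v) A \<in> borel_measurable borel"
    by (intro borel_measurable_continuous_onI linear_continuous_on matrix_vector_mul_bounded_linear)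
  show ?thesis
    unfolding dirmap_def[abs_def] by measurable
qed

lemma Lrec_le_imp_inner_ge:
  fixes A :: "real^'d^'k" and v :: "real^'k"
  assumes Ax: "A *v x \<noteq> 0" and v: "v \<noteq> 0" and a: "a < 1"
    and L: "Lrec (dirmap A x) v \<le> sqrt (2 - 2 * a)"
  shows "a \<le> dirmap A x \<bullet> (v /\<^sub>R norm v)"
proof -
  define u where "u = dirmap A x"
  define e where "e = v /\<^sub>R norm v"
  have u: "norm u = 1" "u \<bullet> u = 1"
    using Ax by (simp_all add: u_def dirmap_def power2_norm_eq_inner[symmetric])
  have e: "e \<bullet> e = 1"
    using v by (simp add: e_def power2_norm_eq_inner[symmetric])
  have "norm (u - e) \<le> sqrt (2 - 2 * a)"
    using L v u by (simp add: Lrec_def u_def e_def)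
  then have "(norm (u - e))\<^sup>2 \<le> (sqrt (2 - 2 * a))\<^sup>2"
    by (intro power_mono) auto
  then have "(norm (u - e))\<^sup>2 \<le> 2 - 2 * a"
    using a by simp
  moreover have "(norm (u - e))\<^sup>2 = 2 - 2 * (u \<bullet> e)"
    using u e by (simp add: power2_norm_eq_inner inner_diff_left inner_diff_right inner_commute)
  ultimately show ?thesis
    by (simp add: u_def e_def)
qed

lemma emeasure_sphere_unif_cap_le:
  fixes e :: "real^'k"
  assumes a: "0 < a" and c: "0 \<le> c"
    and cone: "emeasure lborel (cap_cone a e) \<le> ennreal c * emeasure lborel (ball (0::real^'k) 1)"
  shows "emeasure sphere_unif {u. a \<le> u \<bullet> e} \<le> ennreal c"
proof -
  let ?S = "{y::real^'k. a \<le> (y /\<^sub>R norm y) \<bullet> e}"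
  let ?V = "emeasure lborel (ball (0::real^'k) 1)"
  have V: "?V \<noteq> 0" "?V \<noteq> top"
    using unit_ball_vol_pos[of "real CARD('k)"] by (simp_all add: emeasure_ball del: unit_ball_vol_pos)
  have "ball 0 1 \<inter> ?S \<subseteq> cap_cone a e"
  proof
    fix y :: "real^'k"
    assume y: "y \<in> ball 0 1 \<inter> ?S"
    then have "norm y > 0"
      using a by auto
    moreover have "(y /\<^sub>R norm y) \<bullet> e = (y \<bullet> e) / norm y"
      by (simp add: divide_inverse mult.commute)
    ultimately show "y \<in> cap_cone a e"
      using y by (simp add: cap_cone_def pos_le_divide_eq)
  qed
  then have "emeasure lborel (ball 0 1 \<inter> ?S) / ?V \<le> emeasure lborel (cap_cone a e) / ?V"
    using cap_cone_in_borel[of a e] by (intro divide_right_mono_ennreal emeasure_mono) auto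
  also have "\<dots> \<le> ennreal c * ?V / ?V"
    using cone by (rule divide_right_mono_ennreal)
  also have "\<dots> = ennreal c"
    using V by (rule ennreal_mult_divide_eq)
  finally have "emeasure lborel (ball 0 1 \<inter> ?S) / ?V \<le> ennreal c" .
  moreover have "emeasure sphere_unif {u. a \<le> u \<bullet> e} = emeasure lborel (ball 0 1 \<inter> ?S) / ?V"
    unfolding sphere_unif_def by (subst emeasure_distr) (auto simp: vimage_def)
  ultimately show ?thesis
    by simp
qed

lemma emeasure_prior_cap_le:
  fixes A :: "real^'d^'k" and pr :: "(real^'d) measure" and g :: "real^'k \<Rightarrow> real" and e :: "real^'k"
  assumes sets_pr: "sets pr = sets borel" and a: "0 < a"
    and g: "g \<in> borel_measurable borel"
    and dist: "distr pr borel (dirmap A) = density sphere_unif (\<lambda>v. ennreal (g v))"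
    and g_le: "\<forall>v \<in> sphere 0 1. g v > 0 \<longrightarrow> ln (g v) \<le> \<rho>0"
  shows "emeasure pr {x \<in> space pr. a \<le> dirmap A x \<bullet> e}
           \<le> ennreal (exp \<rho>0) * emeasure sphere_unif {u. a \<le> u \<bullet> e}"
proof -
  let ?C = "{u::real^'k. a \<le> u \<bullet> e}"
  have [measurable]: "dirmap A \<in> pr \<rightarrow>\<^sub>M borel"
    using sets_pr by (simp cong: measurable_cong_sets)
  have [measurable_cong]: "sets (sphere_unif :: (real^'k) measure) = sets borel"
    by (simp add: sphere_unif_def)
  have g_exp: "g v \<le> exp \<rho>0" if "v \<in> sphere 0 1" for v
  proof (cases "g v > 0")
    case True
    then have "ln (g v) \<le> \<rho>0"
      using g_le that by blast
    with True show ?thesis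
      by (metis exp_le_cancel_iff exp_ln)
  qed (use exp_gt_zero[of \<rho>0] in linarith)
  have "y /\<^sub>R norm y \<in> sphere 0 1" if "y /\<^sub>R norm y \<in> ?C" for y :: "real^'k"
  proof -
    have "y \<noteq> 0"
      using that a by auto
    then show ?thesis
      by simp
  qed
  then have "AE y in uniform_measure lborel (ball 0 1). y /\<^sub>R norm y \<in> ?C \<longrightarrow> g (y /\<^sub>R norm y) \<le> exp \<rho>0"
    using g_exp by (intro AE_I2) blast
  then have bound: "AE v in sphere_unif. v \<in> ?C \<longrightarrow> g v \<le> exp \<rho>0"
    unfolding sphere_unif_def using g by (subst AE_distr_iff) auto
  have "emeasure pr {x \<in> space pr. a \<le> dirmap A x \<bullet> e} = emeasure (distr pr borel (dirmap A)) ?C"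
    by (subst emeasure_distr) (auto simp: vimage_def Int_def conj_commute)
  also have "\<dots> = (\<integral>\<^sup>+ v. ennreal (g v) * indicator ?C v \<partial>sphere_unif)"
    unfolding dist using g by (subst emeasure_density) auto
  also have "\<dots> \<le> (\<integral>\<^sup>+ v. ennreal (exp \<rho>0) * indicator ?C v \<partial>sphere_unif)"
    using bound
    by (intro nn_integral_mono_AE) (auto simp: indicator_def ennreal_leI elim!: eventually_mono)
  also have "\<dots> = ennreal (exp \<rho>0) * emeasure sphere_unif ?C"
    by (rule nn_integral_cmult_indicator) simp
  finally show ?thesis .
qed

lemma protected_rec_dirmap:
  fixes A :: "real^'d^'k" and pr :: "(real^'d) measure"
    and K :: "real^'d \<Rightarrow> 'w measure" and q :: "'w \<Rightarrow> 'z \<Rightarrow> real"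
  assumes pr: "prob_space pr" "sets pr = sets borel"
    and nz: "AE x in pr. A *v x \<noteq> 0"
    and dens: "\<exists>g \<in> borel_measurable borel. (\<forall>v. g v \<ge> 0) \<and>
                 distr pr borel (dirmap A) = density sphere_unif (\<lambda>v. ennreal (g v)) \<and>
                 (\<forall>v \<in> sphere 0 1. g v > 0 \<longrightarrow> ln (g v) \<le> \<rho>0)"
    and K: "K \<in> pr \<rightarrow>\<^sub>M prob_algebra N"
    and q: "case_prod q \<in> borel_measurable (N \<Otimes>\<^sub>M \<mu>)"
    and ldp: "\<And>w w' z. w \<in> space N \<Longrightarrow> w' \<in> space N \<Longrightarrow> z \<in> space \<mu> \<Longrightarrow>
                q w z \<le> exp \<epsilon> * q w' z"
    and a: "0 < a" "a < 1" and c: "0 \<le> c"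
    and cone: "\<And>e::real^'k. norm e = 1 \<Longrightarrow>
                 emeasure lborel (cap_cone a e) \<le> ennreal c * emeasure lborel (ball (0::real^'k) 1)"
  shows "protected_rec pr K q \<mu> (dirmap A) Lrec (sqrt (2 - 2 * a)) (exp \<epsilon> * exp \<rho>0 * c)"
  unfolding protected_rec_def
proof (intro ballI)
  fix v z
  assume z: "z \<in> space \<mu>"
  obtain g where g: "g \<in> borel_measurable borel"
    and dist: "distr pr borel (dirmap A) = density sphere_unif (\<lambda>v. ennreal (g v))"
    and g_le: "\<forall>v \<in> sphere 0 1. g v > 0 \<longrightarrow> ln (g v) \<le> \<rho>0"
    using dens by blast
  have qz: "(\<lambda>w. q w z) \<in> borel_measurable N"
    using measurable_compose[OF measurable_Pair2'[OF z] q] by simp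
  define B where "B = {x \<in> space pr. Lrec (dirmap A x) (v z) \<le> sqrt (2 - 2 * a)}"
  show "post pr K q z B \<le> ennreal (exp \<epsilon> * exp \<rho>0 * c)"
  proof (cases "v z = 0")
    case True
    have "sqrt (2 - 2 * a) < sqrt 2"
      using a by simp
    then have "B = {}"
      using True by (auto simp: B_def Lrec_def)
    then show ?thesis
      by (simp add: post_def)
  next
    case False
    define e where "e = v z /\<^sub>R norm (v z)"
    have e: "norm e = 1"
      using False by (simp add: e_def)
    define cap where "cap = {x \<in> space pr. a \<le> dirmap A x \<bullet> e}"
    have cap: "cap \<in> sets pr"
      using pr(2) unfolding cap_def by (simp cong: measurable_cong_sets)
    have "x \<in> cap" if "x \<in> B" "A *v x \<noteq> 0" for x
      using that Lrec_le_imp_inner_ge[OF that(2) False a(2)] unfolding B_def cap_def e_def by blast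
    then have "AE x in pr. x \<in> B \<longrightarrow> x \<in> cap"
      using nz by auto
    then have "post pr K q z B \<le> ennreal (exp \<epsilon>) * emeasure pr cap"
      using ldp z
      by (intro post_le_exp_emeasure[where q=q and z=z and \<epsilon>=\<epsilon>, OF pr(1) K qz _ cap]) auto
    also have "\<dots> \<le> ennreal (exp \<epsilon>) * (ennreal (exp \<rho>0) * emeasure sphere_unif {u. a \<le> u \<bullet> e})"
      unfolding cap_def
      by (intro mult_left_mono emeasure_prior_cap_le[OF pr(2) a(1) g dist g_le]) auto
    also have "\<dots> \<le> ennreal (exp \<epsilon>) * (ennreal (exp \<rho>0) * ennreal c)"
      using emeasure_sphere_unif_cap_le[OF a(1) c cone[OF e]] by (intro mult_left_mono) auto
    finally show ?thesis
      using c by (simp add: ennreal_mult mult.assoc)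
  qed
qed

lemma exp_half_mult_ln:
  assumes "0 < t"
  shows "exp (real n / 2 * ln t) = sqrt t ^ n"
proof -
  have "sqrt t ^ n = exp (ln (sqrt t)) ^ n"
    using assms by simp
  also have "\<dots> = exp (real n * ln (sqrt t))"
    by (rule exp_of_nat_mult[symmetric])
  finally show ?thesis
    using assms by (simp add: ln_sqrt)
qed

lemma exp_small_angle_bound:
  assumes "a\<^sup>2 < 1"
  shows "exp (\<epsilon> + \<rho> + real n / 2 * ln (1 - a\<^sup>2)) = exp \<epsilon> * exp \<rho> * sqrt (1 - a\<^sup>2) ^ n"
  using exp_half_mult_ln[of "1 - a\<^sup>2" n] assms by (simp add: exp_add)

lemma exp_large_angle_bound:
  assumes "a\<^sup>2 < 1" "0 < a" "1 \<le> n"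
  shows "exp (\<epsilon> + \<rho> + (real n - 1) / 2 * ln (1 - a\<^sup>2) - ln (2 * a * sqrt (real n)))
    = exp \<epsilon> * exp \<rho> * (sqrt (1 - a\<^sup>2) ^ (n - 1) / (2 * a * sqrt (real n)))"
  using exp_half_mult_ln[of "1 - a\<^sup>2" "n - 1"] assms by (simp add: exp_add exp_diff of_nat_diff)

theorem proposition2p3:
  fixes A :: "real^'d^'k"
    and pr :: "(real^'d) measure"
    and SW :: "'w measure" and K :: "real^'d \<Rightarrow> 'w measure"
    and \<mu> :: "'z measure" and q :: "'w \<Rightarrow> 'z \<Rightarrow> real"
    and \<epsilon> \<rho>0 a :: real
  assumes k4: "CARD('k) \<ge> 4"
    and dk: "CARD('d) \<ge> CARD('k)"
    and orth: "A ** transpose A = mat 1"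
    and prior: "prob_space pr" "sets pr = sets borel"
    and nz: "AE x in pr. A *v x \<noteq> 0"
    and rho0: "\<rho>0 \<ge> 0"
    and dens: "\<exists>g \<in> borel_measurable borel. (\<forall>v. g v \<ge> 0) \<and>
                 distr pr borel (dirmap A) = density sphere_unif (\<lambda>v. ennreal (g v)) \<and>
                 (\<forall>v \<in> sphere 0 1. g v > 0 \<longrightarrow> ln (g v) \<le> \<rho>0)"
    and kern: "K \<in> pr \<rightarrow>\<^sub>M prob_algebra SW"
    and sfin: "sigma_finite_measure \<mu>"
    and qmeas: "case_prod q \<in> borel_measurable (SW \<Otimes>\<^sub>M \<mu>)"
    and qnn: "\<And>w z. w \<in> space SW \<Longrightarrow> z \<in> space \<mu> \<Longrightarrow> q w z \<ge> 0"
    and qprob: "\<And>w. w \<in> space SW \<Longrightarrow> (\<integral>\<^sup>+ z. ennreal (q w z) \<partial>\<mu>) = 1"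
    and ldp: "\<And>w w' z. w \<in> space SW \<Longrightarrow> w' \<in> space SW \<Longrightarrow> z \<in> space \<mu> \<Longrightarrow>
                q w z \<le> exp \<epsilon> * q w' z"
  shows "(a \<in> {0 .. 1 / sqrt 2} \<longrightarrow>
            protected_rec pr K q \<mu> (dirmap A) Lrec (sqrt (2 - 2 * a))
              (exp (\<epsilon> + \<rho>0 + real CARD('k) / 2 * ln (1 - a\<^sup>2)))) \<and>
         (a \<in> {sqrt (2 / real CARD('k)) ..< 1} \<longrightarrow>
            protected_rec pr K q \<mu> (dirmap A) Lrec (sqrt (2 - 2 * a))
              (exp (\<epsilon> + \<rho>0 + (real CARD('k) - 1) / 2 * ln (1 - a\<^sup>2)
                    - ln (2 * a * sqrt (real CARD('k))))))"
proof -
  note protected = protected_rec_dirmap[OF prior nz dens kern qmeas ldp]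
  have "protected_rec pr K q \<mu> (dirmap A) Lrec (sqrt (2 - 2 * a))
          (exp (\<epsilon> + \<rho>0 + real CARD('k) / 2 * ln (1 - a\<^sup>2)))" if a: "a \<in> {0 .. 1 / sqrt 2}"
  proof (cases "a = 0")
    case True
    then have "exp \<epsilon> \<le> exp (\<epsilon> + \<rho>0 + real CARD('k) / 2 * ln (1 - a\<^sup>2))"
      using rho0 by simp
    with protected_rec_exp[OF prior(1) kern qmeas ldp] show ?thesis
      by (rule protected_rec_mono)
  next
    case False
    have "a \<le> 1 / sqrt 2" "1 / sqrt 2 < (1::real)"
      using a by (simp_all add: divide_less_eq)
    then have "a < 1"
      by linarith
    with a False have a': "0 < a" "a < 1" "a\<^sup>2 < 1"
      by (auto simp: abs_square_less_1)
    then show ?thesis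
      using a unfolding exp_small_angle_bound[OF a'(3)]
      by (intro protected a'(1,2) emeasure_cap_cone_le_small) auto
  qed
  moreover have "protected_rec pr K q \<mu> (dirmap A) Lrec (sqrt (2 - 2 * a))
          (exp (\<epsilon> + \<rho>0 + (real CARD('k) - 1) / 2 * ln (1 - a\<^sup>2) - ln (2 * a * sqrt (real CARD('k)))))"
    if a: "a \<in> {sqrt (2 / real CARD('k)) ..< 1}"
  proof -
    have a': "0 < a" "a < 1" "a\<^sup>2 < 1"
      using a less_le_trans[of 0 "sqrt (2 / real CARD('k))" a] by (auto simp: abs_square_less_1)
    moreover have "1 \<le> CARD('k)"
      using k4 by simp
    ultimately show ?thesis
      using k4 unfolding exp_large_angle_bound[OF a'(3,1) \<open>1 \<le> CARD('k)\<close>]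
      by (intro protected a'(1,2) emeasure_cap_cone_le_large) auto
  qed
  ultimately show ?thesis
    by blast
qed

end
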